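(* Let $h:\mathcal S\to\mathbb R$ be bounded and $\lambda\in[0,1]$, defining the reshaped MDP $\widetilde{\mathcal M}$. For every policy $\pi$, every initial state distribution $d_0$ and every bounded $V:\mathcal S\to\mathbb R$, $$V(d_0)-V^\pi(d_0)=\frac{\gamma(1-\lambda)}{1-\gamma}\,\mathbb E_{(s,a)\sim d^\pi}\,\mathbb E_{s'\sim P(\cdot|s,a)}\big[h(s')-V(s')\big]+\lambda\big(V(d_0)-\widetilde V^\pi(d_0)\big)+\frac{1-\lambda}{1-\gamma}\big(V(d^\pi)-\widetilde V^\pi(d^\pi)\big).$$
   Context: Let $\mathcal M=(\mathcal S,\mathcal A,P,r,\gamma)$ be a discounted MDP with transition kernel $P(\cdot|s,a)$, reward $r:\mathcal S\times\mathcal A\to[0,1]$ and discount $\gamma\in[0,1)$. A policy $\pi$ is a Markov kernel from $\mathcal S$ to distributions on $\mathcal A$; $\rho^\pi(s)$ (resp. $\rho^\pi(d_0)$) is the trajectory law with $s_0=s$ (resp. $s_0\sim d_0$), $a_t\sim\pi(\cdot|s_t)$, $s_{t+1}\sim P(\cdot|s_t,a_t)$. $V^\pi(s)=\mathbb E_{\rho^\pi(s)}[\sum_t\gamma^tr(s_t,a_t)]$. For $V:\mathcal S\to\mathbb R$ and a distribution $d$, $V(d)=\mathbb E_{s\sim d}[V(s)]$. $d_t^\pi$ is the law of $s_t$ under $\rho^\pi(d_0)$, $d^\pi=(1-\gamma)\sum_t\gamma^td_t^\pi$, $d^\pi(s,a)=d^\pi(s)\pi(a|s)$. Reshaped MDP: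 $\widetilde{\mathcal M}=(\mathcal S,\mathcal A,P,\widetilde r,\lambda\gamma)$ with $\widetilde r(s,a)=r(s,a)+(1-\lambda)\gamma\,\mathbb E_{s'\sim P(\cdot|s,a)}[h(s')]$, and $\widetilde V^\pi(s)=\mathbb E_{\rho^\pi(s)}[\sum_t(\lambda\gamma)^t\widetilde r(s_t,a_t)]$. *)

theory Defs
  imports "HOL-Probability.Probability"
begin

text \<open>The transition kernel is P :: 's \<times> 'a \<Rightarrow> 's measure (P(.|s,a) = P (s,a)),
  a policy is a Markov kernel pol :: 's \<Rightarrow> 'a measure.\<close>

definition mdp_step :: "('s \<times> 'a \<Rightarrow> 's measure) \<Rightarrow> ('s \<Rightarrow> 'a measure) \<Rightarrow> 's measure \<Rightarrow> 's measure" where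
  "mdp_step P pol d = d \<bind> (\<lambda>s. pol s \<bind> (\<lambda>a. P (s, a)))"

definition state_dist :: "('s \<times> 'a \<Rightarrow> 's measure) \<Rightarrow> ('s \<Rightarrow> 'a measure) \<Rightarrow> 's measure \<Rightarrow> nat \<Rightarrow> 's measure" where
  "state_dist P pol d t = (mdp_step P pol ^^ t) d"

definition sa_dist :: "'s measure \<Rightarrow> 'a measure \<Rightarrow> ('s \<Rightarrow> 'a measure) \<Rightarrow> 's measure \<Rightarrow> ('s \<times> 'a) measure" where
  "sa_dist S A pol d = d \<bind> (\<lambda>s. pol s \<bind> (\<lambda>a. return (S \<Otimes>\<^sub>M A) (s, a)))"

text \<open>Discounted value with reward R and discount g, started at s:
  E[sum_t g^t R(s_t,a_t)] = sum_t g^t E[R(s_t,a_t)], with (s_t,a_t) having law sa_dist of d_t.\<close>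
definition disc_value :: "'s measure \<Rightarrow> 'a measure \<Rightarrow> ('s \<times> 'a \<Rightarrow> 's measure) \<Rightarrow> ('s \<Rightarrow> 'a measure)
    \<Rightarrow> ('s \<Rightarrow> 'a \<Rightarrow> real) \<Rightarrow> real \<Rightarrow> 's \<Rightarrow> real" where
  "disc_value S A P pol R g s =
     (\<Sum>t. g ^ t * (\<integral>sa. R (fst sa) (snd sa) \<partial>(sa_dist S A pol (state_dist P pol (return S s) t))))"

definition eval_dist :: "'s measure \<Rightarrow> ('s \<Rightarrow> real) \<Rightarrow> real" where
  "eval_dist d V = (\<integral>s. V s \<partial>d)"

definition occupancy :: "'s measure \<Rightarrow> ('s \<times> 'a \<Rightarrow> 's measure) \<Rightarrow> ('s \<Rightarrow> 'a measure) \<Rightarrow> real \<Rightarrow> 's measure \<Rightarrow> 's measure" where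
  "occupancy S P pol g d0 = measure_of (space S) (sets S)
     (\<lambda>X. \<Sum>t. ennreal ((1 - g) * g ^ t) * emeasure (state_dist P pol d0 t) X)"

definition reshaped_reward :: "('s \<times> 'a \<Rightarrow> 's measure) \<Rightarrow> ('s \<Rightarrow> 'a \<Rightarrow> real) \<Rightarrow> real \<Rightarrow> real
    \<Rightarrow> ('s \<Rightarrow> real) \<Rightarrow> 's \<Rightarrow> 'a \<Rightarrow> real" where
  "reshaped_reward P r g lam h s a = r s a + (1 - lam) * g * (\<integral>s'. h s' \<partial>(P (s, a)))"

end

theory Submission
  imports Defs
begin

(* The discounted occupancy measure d^pi is the law of s_T for a time T ~ Geometric(1 - gamma)
   independent of the trajectory.  Hence (1 - gamma) V^pi(d0) is the expected reward under d^pi,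
   and d^pi satisfies the flow equation  d^pi = (1 - gamma) d0 + gamma d^pi P^pi,  where
   d^pi P^pi is the law of the next state s' that carries the term E[h(s') - V(s')].
   Integrating the Bellman equation  V~ = r~ + lambda gamma P^pi V~  of the reshaped MDP against
   d^pi and applying the flow equation to V and V~ leaves a linear identity between finitely
   many real numbers. *)

definition bounded_borel :: "'x measure \<Rightarrow> ('x \<Rightarrow> real) \<Rightarrow> bool" where
  "bounded_borel X f \<longleftrightarrow> f \<in> borel_measurable X \<and> (\<exists>B. \<forall>x\<in>space X. \<bar>f x\<bar> \<le> B)"

lemma bounded_borelI:
  "f \<in> borel_measurable X \<Longrightarrow> (\<And>x. x \<in> space X \<Longrightarrow> \<bar>f x\<bar> \<le> B) \<Longrightarrow> bounded_borel X f"
  unfolding bounded_borel_def by blast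

lemma bounded_borel_measurable: "bounded_borel X f \<Longrightarrow> f \<in> borel_measurable X"
  unfolding bounded_borel_def by blast

lemma bounded_borel_add:
  assumes "bounded_borel X f" "bounded_borel X g"
  shows "bounded_borel X (\<lambda>x. f x + g x)"
proof -
  obtain B C where "f \<in> borel_measurable X" "\<And>x. x \<in> space X \<Longrightarrow> \<bar>f x\<bar> \<le> B"
    and "g \<in> borel_measurable X" "\<And>x. x \<in> space X \<Longrightarrow> \<bar>g x\<bar> \<le> C"
    using assms unfolding bounded_borel_def by blast
  then show ?thesis
    by (intro bounded_borelI[where B="B + C"] borel_measurable_add)
       (auto intro!: order_trans[OF abs_triangle_ineq add_mono])
qed

lemma bounded_borel_cmult:
  assumes "bounded_borel X f"
  shows "bounded_borel X (\<lambda>x. c * f x)"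
proof -
  obtain B where "f \<in> borel_measurable X" "\<And>x. x \<in> space X \<Longrightarrow> \<bar>f x\<bar> \<le> B"
    using assms unfolding bounded_borel_def by blast
  then show ?thesis
    by (intro bounded_borelI[where B="\<bar>c\<bar> * B"]) (auto simp: abs_mult intro: mult_left_mono)
qed

lemma bounded_borel_diff:
  "bounded_borel X f \<Longrightarrow> bounded_borel X g \<Longrightarrow> bounded_borel X (\<lambda>x. f x - g x)"
  using bounded_borel_add[of X f "\<lambda>x. -1 * g x"] bounded_borel_cmult[of X g "-1"] by simp

lemma prob_algebra_space_eq:
  "\<mu> \<in> space (prob_algebra X) \<Longrightarrow> space \<mu> = space X"
  by (rule sets_eq_imp_space_eq) (simp add: space_prob_algebra)

lemma integrable_bounded_borel:
  assumes "\<mu> \<in> space (prob_algebra X)" "bounded_borel X f"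
  shows "integrable \<mu> f"
proof -
  interpret prob_space \<mu> using assms(1) by (simp add: space_prob_algebra)
  obtain B where "f \<in> borel_measurable X" "\<And>x. x \<in> space X \<Longrightarrow> \<bar>f x\<bar> \<le> B"
    using assms(2) unfolding bounded_borel_def by blast
  with assms(1) show ?thesis
    by (intro integrable_const_bound[where B=B])
       (auto simp: prob_algebra_space_eq space_prob_algebra cong: measurable_cong_sets)
qed

lemma abs_integral_le_bound:
  fixes f :: "'x \<Rightarrow> real"
  assumes "\<mu> \<in> space (prob_algebra X)" "f \<in> borel_measurable X" "\<And>x. x \<in> space X \<Longrightarrow> \<bar>f x\<bar> \<le> B"
  shows "\<bar>\<integral>x. f x \<partial>\<mu>\<bar> \<le> B"
proof -
  interpret prob_space \<mu> using assms(1) by (simp add: space_prob_algebra)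
  have "integrable \<mu> f"
    using assms by (intro integrable_bounded_borel bounded_borelI)
  have "\<bar>\<integral>x. f x \<partial>\<mu>\<bar> \<le> (\<integral>x. \<bar>f x\<bar> \<partial>\<mu>)" by (rule integral_abs_bound)
  also have "\<dots> \<le> B"
    using assms(3) \<open>integrable \<mu> f\<close> by (intro integral_le_const) (auto simp: prob_algebra_space_eq[OF assms(1)])
  finally show ?thesis .
qed

lemma bounded_borel_integral_bounded:
  assumes "bounded_borel X f"
  shows "\<exists>B. \<forall>\<mu>\<in>space (prob_algebra X). \<bar>\<integral>x. f x \<partial>\<mu>\<bar> \<le> B"
proof -
  obtain B where "f \<in> borel_measurable X" "\<And>x. x \<in> space X \<Longrightarrow> \<bar>f x\<bar> \<le> B"
    using assms unfolding bounded_borel_def by blast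
  then show ?thesis
    using abs_integral_le_bound by blast
qed

lemma measurable_kernel_subprob:
  "\<mu> \<in> space (prob_algebra X) \<Longrightarrow> N \<in> X \<rightarrow>\<^sub>M prob_algebra Y \<Longrightarrow> N \<in> measurable \<mu> (subprob_algebra Y)"
  by (auto intro: measurable_prob_algebraD simp: space_prob_algebra cong: measurable_cong_sets)

lemma bind_in_prob_algebra:
  "\<mu> \<in> space (prob_algebra X) \<Longrightarrow> N \<in> X \<rightarrow>\<^sub>M prob_algebra Y \<Longrightarrow> \<mu> \<bind> N \<in> space (prob_algebra Y)"
  by (simp add: space_prob_algebra prob_space_bind' sets_bind')

lemma bind_assoc_prob_algebra:
  assumes "\<mu> \<in> space (prob_algebra X)" "M \<in> X \<rightarrow>\<^sub>M prob_algebra Y" "N \<in> Y \<rightarrow>\<^sub>M prob_algebra Z"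
  shows "\<mu> \<bind> M \<bind> N = \<mu> \<bind> (\<lambda>x. M x \<bind> N)"
  by (rule bind_assoc[OF measurable_kernel_subprob[OF assms(1,2)] measurable_prob_algebraD[OF assms(3)]])

lemma integral_bind_kernel:
  assumes \<mu>: "\<mu> \<in> space (prob_algebra X)" and N: "N \<in> X \<rightarrow>\<^sub>M prob_algebra Y"
    and f: "bounded_borel Y f"
  shows "(\<integral>y. f y \<partial>(\<mu> \<bind> N)) = (\<integral>x. (\<integral>y. f y \<partial>N x) \<partial>\<mu>)"
proof -
  interpret prob_space \<mu> using \<mu> by (simp add: space_prob_algebra)
  obtain B where f_meas: "f \<in> borel_measurable Y" and f_bound: "\<And>y. y \<in> space Y \<Longrightarrow> \<bar>f y\<bar> \<le> B"
    using f unfolding bounded_borel_def by blast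
  have "AE x in \<mu>. emeasure (N x) (space (N x)) \<le> ennreal 1"
    using measurable_space[OF N] by (intro AE_I2) (simp add: prob_algebra_space_eq[OF \<mu>]
        space_prob_algebra prob_space.emeasure_space_1)
  from integral_bind[OF f_meas f_bound measurable_kernel_subprob[OF \<mu> N] finite_measure_axioms this]
  show ?thesis by simp
qed

lemma bounded_borel_kernel_integral:
  assumes N: "N \<in> X \<rightarrow>\<^sub>M prob_algebra Y" and f: "bounded_borel Y f"
  shows "bounded_borel X (\<lambda>x. \<integral>y. f y \<partial>N x)"
proof -
  obtain B where "f \<in> borel_measurable Y" "\<And>y. y \<in> space Y \<Longrightarrow> \<bar>f y\<bar> \<le> B"
    using f unfolding bounded_borel_def by blast
  then show ?thesis
    by (intro bounded_borelI[where B=B] measurable_compose[OF measurable_prob_algebraD[OF N]]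
        integral_measurable_subprob_algebra abs_integral_le_bound[OF measurable_space[OF N]])
qed

lemma summable_geometric_dominated:
  fixes u :: "nat \<Rightarrow> real"
  assumes "\<bar>c\<bar> < 1" "\<And>t. \<bar>u t\<bar> \<le> \<bar>c\<bar> ^ t * B"
  shows "summable u"
proof (rule summable_comparison_test')
  show "summable (\<lambda>t. \<bar>c\<bar> ^ t * B)"
    using assms(1) by (intro summable_mult2 summable_geometric) simp
  show "norm (u t) \<le> \<bar>c\<bar> ^ t * B" for t
    using assms(2) by simp
qed

lemma abs_suminf_geometric_dominated_le:
  fixes u :: "nat \<Rightarrow> real"
  assumes c: "\<bar>c\<bar> < 1" and u: "\<And>t. \<bar>u t\<bar> \<le> \<bar>c\<bar> ^ t * B"
  shows "\<bar>suminf u\<bar> \<le> B / (1 - \<bar>c\<bar>)"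
proof -
  have "summable (\<lambda>t. \<bar>c\<bar> ^ t * B)"
    using c by (intro summable_mult2 summable_geometric) simp
  moreover have "summable (\<lambda>t. \<bar>u t\<bar>)"
    using c u by (intro summable_geometric_dominated[where B=B]) auto
  ultimately have "\<bar>suminf u\<bar> \<le> (\<Sum>t. \<bar>c\<bar> ^ t * B)"
    using u by (intro order_trans[OF summable_rabs] suminf_le)
  also have "\<dots> = B / (1 - \<bar>c\<bar>)"
    using c by (simp add: suminf_mult2[symmetric] suminf_geometric)
  finally show ?thesis .
qed

lemma suminf_power_mult_split:
  fixes u :: "nat \<Rightarrow> real"
  assumes c: "\<bar>c\<bar> < 1" and u: "\<And>t. \<bar>u t\<bar> \<le> B"
  shows "(\<Sum>t. c ^ t * u t) = u 0 + c * (\<Sum>t. c ^ t * u (Suc t))"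
proof -
  have summable: "summable (\<lambda>t. c ^ t * u (Suc t))" "summable (\<lambda>t. c ^ t * u t)"
    using c u by (auto intro!: summable_geometric_dominated[where B=B]
        simp: abs_mult power_abs mult_left_mono)
  have "(\<Sum>t. c ^ t * u t) = u 0 + (\<Sum>t. c ^ Suc t * u (Suc t))"
    using suminf_split_head[OF summable(2)] by simp
  also have "(\<Sum>t. c ^ Suc t * u (Suc t)) = c * (\<Sum>t. c ^ t * u (Suc t))"
    using suminf_mult[OF summable(1), of c] by (simp add: mult.assoc)
  finally show ?thesis .
qed

lemma measure_pmf_in_prob_algebra: "measure_pmf p \<in> space (prob_algebra (count_space UNIV))"
  by (simp add: space_prob_algebra measure_pmf.prob_space_axioms)

lemma integral_geometric_pmf:
  fixes \<phi> :: "nat \<Rightarrow> real"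
  assumes g: "0 \<le> g" "g < 1" and \<phi>: "\<And>t. \<bar>\<phi> t\<bar> \<le> B"
  shows "(\<integral>t. \<phi> t \<partial>geometric_pmf (1 - g)) = (1 - g) * (\<Sum>t. g ^ t * \<phi> t)"
proof -
  have pmf: "pmf (geometric_pmf (1 - g)) t * \<phi> t = (1 - g) * (g ^ t * \<phi> t)" for t
    using g by simp
  have summable: "summable (\<lambda>t. \<bar>g ^ t * \<phi> t\<bar>)"
    using g \<phi> by (intro summable_geometric_dominated[where c=g and B=B]) (auto simp: abs_mult mult_left_mono)
  have "(\<integral>t. \<phi> t \<partial>geometric_pmf (1 - g))
      = (\<integral>t. pmf (geometric_pmf (1 - g)) t * \<phi> t \<partial>count_space UNIV)"
    unfolding measure_pmf_eq_density by (subst integral_density) auto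
  also have "\<dots> = (\<Sum>t. pmf (geometric_pmf (1 - g)) t * \<phi> t)"
    using summable g unfolding pmf
    by (intro integral_count_space_nat) (simp add: integrable_count_space_nat_iff abs_mult)
  also have "\<dots> = (1 - g) * (\<Sum>t. g ^ t * \<phi> t)"
    unfolding pmf by (rule suminf_mult[OF summable_rabs_cancel[OF summable]])
  finally show ?thesis .
qed

lemma integral_bind_geometric_pmf:
  assumes g: "0 \<le> g" "g < 1" and \<mu>: "\<And>t. \<mu> t \<in> space (prob_algebra X)" and f: "bounded_borel X f"
  shows "(\<integral>x. f x \<partial>(measure_pmf (geometric_pmf (1 - g)) \<bind> \<mu>))
    = (1 - g) * (\<Sum>t. g ^ t * (\<integral>x. f x \<partial>\<mu> t))"
proof -
  obtain B where "\<forall>\<nu>\<in>space (prob_algebra X). \<bar>\<integral>x. f x \<partial>\<nu>\<bar> \<le> B"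
    using bounded_borel_integral_bounded[OF f] by blast
  then have bound: "\<bar>\<integral>x. f x \<partial>\<mu> t\<bar> \<le> B" for t
    using \<mu> by blast
  have "\<mu> \<in> count_space UNIV \<rightarrow>\<^sub>M prob_algebra X" using \<mu> by simp
  then have "(\<integral>x. f x \<partial>(measure_pmf (geometric_pmf (1 - g)) \<bind> \<mu>))
      = (\<integral>t. (\<integral>x. f x \<partial>\<mu> t) \<partial>geometric_pmf (1 - g))"
    by (rule integral_bind_kernel[OF measure_pmf_in_prob_algebra _ f])
  also have "\<dots> = (1 - g) * (\<Sum>t. g ^ t * (\<integral>x. f x \<partial>\<mu> t))"
    by (rule integral_geometric_pmf[OF g bound])
  finally show ?thesis .
qed

locale mdp_policy =
  fixes S :: "'s measure" and A :: "'a measure"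
    and P :: "'s \<times> 'a \<Rightarrow> 's measure" and pol :: "'s \<Rightarrow> 'a measure"
  assumes P_kernel: "P \<in> S \<Otimes>\<^sub>M A \<rightarrow>\<^sub>M prob_algebra S"
    and pol_kernel: "pol \<in> S \<rightarrow>\<^sub>M prob_algebra A"
begin

lemma mdp_step_kernel: "(\<lambda>s. pol s \<bind> (\<lambda>a. P (s, a))) \<in> S \<rightarrow>\<^sub>M prob_algebra S"
  by (rule measurable_bind_prob_space2[OF pol_kernel]) (simp add: P_kernel)

lemma sa_dist_kernel: "(\<lambda>s. pol s \<bind> (\<lambda>a. return (S \<Otimes>\<^sub>M A) (s, a))) \<in> S \<rightarrow>\<^sub>M prob_algebra (S \<Otimes>\<^sub>M A)"
  by (rule measurable_bind_prob_space2[OF pol_kernel]) (simp add: measurable_return_prob_space)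

lemma mdp_step_prob: "\<nu> \<in> space (prob_algebra S) \<Longrightarrow> mdp_step P pol \<nu> \<in> space (prob_algebra S)"
  unfolding mdp_step_def by (rule bind_in_prob_algebra[OF _ mdp_step_kernel])

lemma sa_dist_prob: "\<nu> \<in> space (prob_algebra S) \<Longrightarrow> sa_dist S A pol \<nu> \<in> space (prob_algebra (S \<Otimes>\<^sub>M A))"
  unfolding sa_dist_def by (rule bind_in_prob_algebra[OF _ sa_dist_kernel])

lemma state_dist_0 [simp]: "state_dist P pol \<nu> 0 = \<nu>"
  by (simp add: state_dist_def)

lemma state_dist_Suc: "state_dist P pol \<nu> (Suc t) = mdp_step P pol (state_dist P pol \<nu> t)"
  by (simp add: state_dist_def)

lemma state_dist_Suc': "state_dist P pol \<nu> (Suc t) = state_dist P pol (mdp_step P pol \<nu>) t"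
  by (simp add: state_dist_def funpow_Suc_right del: funpow.simps)

lemma state_dist_prob: "\<nu> \<in> space (prob_algebra S) \<Longrightarrow> state_dist P pol \<nu> t \<in> space (prob_algebra S)"
  by (induction t) (simp_all add: state_dist_Suc mdp_step_prob)

lemma measurable_mdp_step:
  "N \<in> X \<rightarrow>\<^sub>M prob_algebra S \<Longrightarrow> (\<lambda>x. mdp_step P pol (N x)) \<in> X \<rightarrow>\<^sub>M prob_algebra S"
  unfolding mdp_step_def by (rule measurable_bind_prob_space[OF _ mdp_step_kernel])

lemma measurable_sa_dist:
  "N \<in> X \<rightarrow>\<^sub>M prob_algebra S \<Longrightarrow> (\<lambda>x. sa_dist S A pol (N x)) \<in> X \<rightarrow>\<^sub>M prob_algebra (S \<Otimes>\<^sub>M A)"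
  unfolding sa_dist_def by (rule measurable_bind_prob_space[OF _ sa_dist_kernel])

lemma mdp_step_bind:
  "\<mu> \<in> space (prob_algebra X) \<Longrightarrow> N \<in> X \<rightarrow>\<^sub>M prob_algebra S \<Longrightarrow>
    mdp_step P pol (\<mu> \<bind> N) = \<mu> \<bind> (\<lambda>x. mdp_step P pol (N x))"
  unfolding mdp_step_def by (rule bind_assoc_prob_algebra[OF _ _ mdp_step_kernel])

lemma sa_dist_bind:
  "\<mu> \<in> space (prob_algebra X) \<Longrightarrow> N \<in> X \<rightarrow>\<^sub>M prob_algebra S \<Longrightarrow>
    sa_dist S A pol (\<mu> \<bind> N) = \<mu> \<bind> (\<lambda>x. sa_dist S A pol (N x))"
  unfolding sa_dist_def by (rule bind_assoc_prob_algebra[OF _ _ sa_dist_kernel])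

lemma measurable_state_dist_return: "(\<lambda>s. state_dist P pol (return S s) t) \<in> S \<rightarrow>\<^sub>M prob_algebra S"
  by (induction t) (simp_all add: state_dist_Suc measurable_return_prob_space measurable_mdp_step)

lemma state_dist_eq_bind:
  assumes \<nu>: "\<nu> \<in> space (prob_algebra S)"
  shows "state_dist P pol \<nu> t = \<nu> \<bind> (\<lambda>s. state_dist P pol (return S s) t)"
proof (induction t)
  case 0
  then show ?case using \<nu> by (simp add: bind_return'' space_prob_algebra)
next
  case (Suc t)
  then show ?case by (simp add: state_dist_Suc mdp_step_bind[OF \<nu> measurable_state_dist_return])
qed

lemma sa_dist_bind_transition:
  assumes \<nu>: "\<nu> \<in> space (prob_algebra S)"
  shows "sa_dist S A pol \<nu> \<bind> P = mdp_step P pol \<nu>"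
proof -
  have "pol s \<bind> (\<lambda>a. return (S \<Otimes>\<^sub>M A) (s, a)) \<bind> P = pol s \<bind> (\<lambda>a. P (s, a))"
    if s: "s \<in> space S" for s
  proof -
    have ret: "(\<lambda>a. return (S \<Otimes>\<^sub>M A) (s, a)) \<in> A \<rightarrow>\<^sub>M prob_algebra (S \<Otimes>\<^sub>M A)"
      using s by (intro measurable_compose[OF _ measurable_return_prob_space]) simp
    have "pol s \<bind> (\<lambda>a. return (S \<Otimes>\<^sub>M A) (s, a)) \<bind> P
        = pol s \<bind> (\<lambda>a. return (S \<Otimes>\<^sub>M A) (s, a) \<bind> P)"
      by (rule bind_assoc_prob_algebra[OF measurable_space[OF pol_kernel s] ret P_kernel])
    also have "\<dots> = pol s \<bind> (\<lambda>a. P (s, a))"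
      using s measurable_prob_algebraD[OF P_kernel]
      by (intro bind_cong refl) (simp add: bind_return space_pair_measure
          prob_algebra_space_eq[OF measurable_space[OF pol_kernel s]])
    finally show ?thesis .
  qed
  then show ?thesis
    unfolding sa_dist_def mdp_step_def bind_assoc_prob_algebra[OF \<nu> sa_dist_kernel P_kernel]
    by (intro bind_cong refl) (simp add: prob_algebra_space_eq[OF \<nu>])
qed

lemma integral_sa_dist_transition:
  assumes \<nu>: "\<nu> \<in> space (prob_algebra S)" and f: "bounded_borel S f"
  shows "(\<integral>sa. (\<integral>s'. f s' \<partial>P sa) \<partial>sa_dist S A pol \<nu>) = (\<integral>s'. f s' \<partial>mdp_step P pol \<nu>)"
  using integral_bind_kernel[OF sa_dist_prob[OF \<nu>] P_kernel f] by (simp add: sa_dist_bind_transition[OF \<nu>])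

lemma bounded_borel_expected_reward:
  assumes "bounded_borel (S \<Otimes>\<^sub>M A) R"
  shows "bounded_borel S (\<lambda>s. \<integral>sa. R sa \<partial>sa_dist S A pol (state_dist P pol (return S s) t))"
  by (rule bounded_borel_kernel_integral[OF measurable_sa_dist[OF measurable_state_dist_return] assms])

lemma integral_sa_dist_state_dist:
  assumes \<nu>: "\<nu> \<in> space (prob_algebra S)" and R: "bounded_borel (S \<Otimes>\<^sub>M A) R"
  shows "(\<integral>s. (\<integral>sa. R sa \<partial>sa_dist S A pol (state_dist P pol (return S s) t)) \<partial>\<nu>)
    = (\<integral>sa. R sa \<partial>sa_dist S A pol (state_dist P pol \<nu> t))"
  by (simp add: state_dist_eq_bind[OF \<nu>] sa_dist_bind[OF \<nu> measurable_state_dist_return]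
      integral_bind_kernel[OF \<nu> measurable_sa_dist[OF measurable_state_dist_return] R])

context
  fixes R :: "'s \<Rightarrow> 'a \<Rightarrow> real" and c :: real
  assumes R: "bounded_borel (S \<Otimes>\<^sub>M A) (\<lambda>sa. R (fst sa) (snd sa))" and c: "\<bar>c\<bar> < 1"
begin

lemma disc_value_term_bound:
  assumes B: "\<forall>\<mu>\<in>space (prob_algebra (S \<Otimes>\<^sub>M A)). \<bar>\<integral>sa. R (fst sa) (snd sa) \<partial>\<mu>\<bar> \<le> B"
    and s: "s \<in> space S"
  shows "\<bar>c ^ t * (\<integral>sa. R (fst sa) (snd sa) \<partial>sa_dist S A pol (state_dist P pol (return S s) t))\<bar>
    \<le> \<bar>c\<bar> ^ t * B"
  using B sa_dist_prob[OF measurable_space[OF measurable_state_dist_return s]]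
  by (simp add: abs_mult power_abs mult_left_mono)

lemma bounded_borel_disc_value: "bounded_borel S (disc_value S A P pol R c)"
proof -
  obtain B where B: "\<forall>\<mu>\<in>space (prob_algebra (S \<Otimes>\<^sub>M A)). \<bar>\<integral>sa. R (fst sa) (snd sa) \<partial>\<mu>\<bar> \<le> B"
    using bounded_borel_integral_bounded[OF R] by blast
  have "(\<lambda>s. \<integral>sa. R (fst sa) (snd sa) \<partial>sa_dist S A pol (state_dist P pol (return S s) t)) \<in> borel_measurable S" for t
    by (rule bounded_borel_measurable[OF bounded_borel_expected_reward[OF R]])
  then show ?thesis
    unfolding disc_value_def
    by (intro bounded_borelI[where B="B / (1 - \<bar>c\<bar>)"] borel_measurable_suminf borel_measurable_times
        abs_suminf_geometric_dominated_le[OF c disc_value_term_bound[OF B]]) simp_all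
qed

lemma integral_disc_value:
  assumes \<nu>: "\<nu> \<in> space (prob_algebra S)"
  shows "(\<integral>s. disc_value S A P pol R c s \<partial>\<nu>)
    = (\<Sum>t. c ^ t * (\<integral>sa. R (fst sa) (snd sa) \<partial>sa_dist S A pol (state_dist P pol \<nu> t)))"
proof -
  let ?f = "\<lambda>t s. c ^ t * (\<integral>sa. R (fst sa) (snd sa) \<partial>sa_dist S A pol (state_dist P pol (return S s) t))"
  obtain B where B: "\<forall>\<mu>\<in>space (prob_algebra (S \<Otimes>\<^sub>M A)). \<bar>\<integral>sa. R (fst sa) (snd sa) \<partial>\<mu>\<bar> \<le> B"
    using bounded_borel_integral_bounded[OF R] by blast
  have f_bound: "\<bar>norm (?f t s)\<bar> \<le> \<bar>c\<bar> ^ t * B" if "s \<in> space S" for t s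
    using disc_value_term_bound[OF B that] by (simp only: real_norm_def abs_abs)
  have f: "bounded_borel S (?f t)" for t
    by (rule bounded_borel_cmult[OF bounded_borel_expected_reward[OF R]])
  then have f_meas: "?f t \<in> borel_measurable S" for t
    by (rule bounded_borel_measurable)
  have pointwise: "AE s in \<nu>. summable (\<lambda>t. norm (?f t s))"
  proof (rule AE_I2)
    fix s assume "s \<in> space \<nu>"
    then have "s \<in> space S" by (simp add: prob_algebra_space_eq[OF \<nu>])
    then show "summable (\<lambda>t. norm (?f t s))"
      by (rule summable_geometric_dominated[OF c f_bound])
  qed
  have "\<bar>\<integral>s. norm (?f t s) \<partial>\<nu>\<bar> \<le> \<bar>c\<bar> ^ t * B" for t
    by (rule abs_integral_le_bound[OF \<nu> measurable_compose[OF f_meas borel_measurable_norm] f_bound])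
  then have "summable (\<lambda>t. \<integral>s. norm (?f t s) \<partial>\<nu>)"
    by (rule summable_geometric_dominated[OF c])
  then have "(\<integral>s. disc_value S A P pol R c s \<partial>\<nu>) = (\<Sum>t. \<integral>s. ?f t s \<partial>\<nu>)"
    unfolding disc_value_def by (rule integral_suminf[OF integrable_bounded_borel[OF \<nu> f] pointwise])
  then show ?thesis
    by (simp add: integral_sa_dist_state_dist[OF \<nu> R])
qed

lemma integral_disc_value_step:
  assumes \<nu>: "\<nu> \<in> space (prob_algebra S)"
  shows "(\<integral>s. disc_value S A P pol R c s \<partial>\<nu>)
    = (\<integral>sa. R (fst sa) (snd sa) \<partial>sa_dist S A pol \<nu>)
      + c * (\<integral>s. disc_value S A P pol R c s \<partial>mdp_step P pol \<nu>)"
proof -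
  define u where "u t = (\<integral>sa. R (fst sa) (snd sa) \<partial>sa_dist S A pol (state_dist P pol \<nu> t))" for t
  obtain B where "\<forall>\<mu>\<in>space (prob_algebra (S \<Otimes>\<^sub>M A)). \<bar>\<integral>sa. R (fst sa) (snd sa) \<partial>\<mu>\<bar> \<le> B"
    using bounded_borel_integral_bounded[OF R] by blast
  then have "\<bar>u t\<bar> \<le> B" for t
    unfolding u_def using sa_dist_prob[OF state_dist_prob[OF \<nu>]] by blast
  then have "(\<Sum>t. c ^ t * u t) = u 0 + c * (\<Sum>t. c ^ t * u (Suc t))"
    by (rule suminf_power_mult_split[OF c])
  then show ?thesis
    by (simp add: integral_disc_value \<nu> mdp_step_prob u_def state_dist_Suc')
qed

end

lemma bounded_borel_reshaped_reward:
  assumes "bounded_borel (S \<Otimes>\<^sub>M A) (\<lambda>sa. r (fst sa) (snd sa))" "bounded_borel S h"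
  shows "bounded_borel (S \<Otimes>\<^sub>M A) (\<lambda>sa. reshaped_reward P r g lam h (fst sa) (snd sa))"
  unfolding reshaped_reward_def prod.collapse
  by (intro bounded_borel_add bounded_borel_cmult bounded_borel_kernel_integral[OF P_kernel] assms)

lemma integral_reshaped_reward:
  assumes \<nu>: "\<nu> \<in> space (prob_algebra S)"
    and r: "bounded_borel (S \<Otimes>\<^sub>M A) (\<lambda>sa. r (fst sa) (snd sa))" and h: "bounded_borel S h"
  shows "(\<integral>sa. reshaped_reward P r g lam h (fst sa) (snd sa) \<partial>sa_dist S A pol \<nu>)
    = (\<integral>sa. r (fst sa) (snd sa) \<partial>sa_dist S A pol \<nu>) + (1 - lam) * g * (\<integral>s. h s \<partial>mdp_step P pol \<nu>)"
proof -
  have "integrable (sa_dist S A pol \<nu>) (\<lambda>sa. \<integral>s'. h s' \<partial>P sa)"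
    by (rule integrable_bounded_borel[OF sa_dist_prob[OF \<nu>] bounded_borel_kernel_integral[OF P_kernel h]])
  then show ?thesis
    unfolding reshaped_reward_def prod.collapse
    by (simp add: integrable_bounded_borel[OF sa_dist_prob[OF \<nu>] r] integral_sa_dist_transition[OF \<nu> h])
qed

context
  fixes g :: real and d0 :: "'s measure"
  assumes g: "0 \<le> g" "g < 1" and d0: "d0 \<in> space (prob_algebra S)"
begin

lemma occupancy_eq_bind:
  "occupancy S P pol g d0 = measure_pmf (geometric_pmf (1 - g)) \<bind> state_dist P pol d0"
proof -
  let ?B = "measure_pmf (geometric_pmf (1 - g)) \<bind> state_dist P pol d0"
  have kernel: "state_dist P pol d0 \<in> count_space UNIV \<rightarrow>\<^sub>M prob_algebra S"
    using state_dist_prob[OF d0] by simp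
  have sets: "sets ?B = sets S"
    using sets_bind'[OF measure_pmf_in_prob_algebra kernel] by simp
  have "emeasure ?B X = (\<Sum>t. ennreal ((1 - g) * g ^ t) * emeasure (state_dist P pol d0 t) X)"
    if X: "X \<in> sets S" for X
  proof -
    have "emeasure ?B X = (\<integral>\<^sup>+t. emeasure (state_dist P pol d0 t) X \<partial>geometric_pmf (1 - g))"
      using measurable_prob_algebraD[OF kernel] X by (intro emeasure_bind) simp_all
    also have "\<dots> = (\<Sum>t. ennreal ((1 - g) * g ^ t) * emeasure (state_dist P pol d0 t) X)"
      using g by (simp add: nn_integral_measure_pmf nn_integral_count_space_nat mult.commute)
    finally show ?thesis .
  qed
  then have "occupancy S P pol g d0 = measure_of (space S) (sets S) (emeasure ?B)"
    unfolding occupancy_def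
    by (intro measure_of_eq[OF sets.space_closed]) (simp add: sets.sigma_sets_eq)
  also have "\<dots> = ?B"
    using measure_of_of_measure[of ?B] sets by (simp add: sets_eq_imp_space_eq[OF sets])
  finally show ?thesis .
qed

lemma occupancy_prob: "occupancy S P pol g d0 \<in> space (prob_algebra S)"
  unfolding occupancy_eq_bind using state_dist_prob[OF d0]
  by (intro bind_in_prob_algebra[OF measure_pmf_in_prob_algebra]) simp

lemma mdp_step_occupancy:
  "mdp_step P pol (occupancy S P pol g d0)
    = measure_pmf (geometric_pmf (1 - g)) \<bind> (\<lambda>t. state_dist P pol d0 (Suc t))"
  unfolding occupancy_eq_bind using state_dist_prob[OF d0]
  by (simp add: mdp_step_bind[OF measure_pmf_in_prob_algebra] state_dist_Suc)

lemma integral_occupancy_flow: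
  assumes f: "bounded_borel S f"
  shows "(\<integral>s. f s \<partial>occupancy S P pol g d0)
    = (1 - g) * (\<integral>s. f s \<partial>d0) + g * (\<integral>s. f s \<partial>mdp_step P pol (occupancy S P pol g d0))"
proof -
  define u where "u t = (\<integral>s. f s \<partial>state_dist P pol d0 t)" for t
  obtain B where "\<forall>\<nu>\<in>space (prob_algebra S). \<bar>\<integral>s. f s \<partial>\<nu>\<bar> \<le> B"
    using bounded_borel_integral_bounded[OF f] by blast
  then have "\<bar>u t\<bar> \<le> B" for t
    unfolding u_def using state_dist_prob[OF d0] by blast
  then have split: "(\<Sum>t. g ^ t * u t) = u 0 + g * (\<Sum>t. g ^ t * u (Suc t))"
    using g by (intro suminf_power_mult_split) auto
  have "(\<integral>s. f s \<partial>occupancy S P pol g d0) = (1 - g) * (\<Sum>t. g ^ t * u t)"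
    unfolding occupancy_eq_bind u_def by (rule integral_bind_geometric_pmf[OF g state_dist_prob[OF d0] f])
  also have "\<dots> = (1 - g) * u 0 + g * ((1 - g) * (\<Sum>t. g ^ t * u (Suc t)))"
    unfolding split by (simp add: algebra_simps)
  also have "(1 - g) * (\<Sum>t. g ^ t * u (Suc t)) = (\<integral>s. f s \<partial>mdp_step P pol (occupancy S P pol g d0))"
    unfolding mdp_step_occupancy u_def by (rule integral_bind_geometric_pmf[OF g state_dist_prob[OF d0] f, symmetric])
  finally show ?thesis by (simp add: u_def)
qed

lemma integral_disc_value_occupancy:
  assumes R: "bounded_borel (S \<Otimes>\<^sub>M A) (\<lambda>sa. R (fst sa) (snd sa))"
  shows "(\<integral>s. disc_value S A P pol R g s \<partial>d0)
    = (\<integral>sa. R (fst sa) (snd sa) \<partial>sa_dist S A pol (occupancy S P pol g d0)) / (1 - g)"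
proof -
  have "state_dist P pol d0 \<in> count_space UNIV \<rightarrow>\<^sub>M prob_algebra S"
    using state_dist_prob[OF d0] by simp
  then have "sa_dist S A pol (occupancy S P pol g d0)
      = measure_pmf (geometric_pmf (1 - g)) \<bind> (\<lambda>t. sa_dist S A pol (state_dist P pol d0 t))"
    unfolding occupancy_eq_bind by (rule sa_dist_bind[OF measure_pmf_in_prob_algebra])
  then have "(\<integral>sa. R (fst sa) (snd sa) \<partial>sa_dist S A pol (occupancy S P pol g d0))
      = (1 - g) * (\<Sum>t. g ^ t * (\<integral>sa. R (fst sa) (snd sa) \<partial>sa_dist S A pol (state_dist P pol d0 t)))"
    using integral_bind_geometric_pmf[OF g sa_dist_prob[OF state_dist_prob[OF d0]] R] by simp
  also have "\<dots> = (1 - g) * (\<integral>s. disc_value S A P pol R g s \<partial>d0)"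
    using g by (simp add: integral_disc_value[OF R _ d0])
  finally show ?thesis using g by simp
qed

end

end

lemma value_difference_identity:
  fixes g lam v0 v1 vo w0 w1 wo x eta :: real
  assumes g: "g < 1"
    and flow_v: "vo = (1 - g) * v0 + g * v1" and flow_w: "wo = (1 - g) * w0 + g * w1"
    and bellman: "wo = x + (1 - lam) * g * eta + lam * g * w1"
  shows "v0 - x / (1 - g)
    = g * (1 - lam) / (1 - g) * (eta - v1) + lam * (v0 - w0) + (1 - lam) / (1 - g) * (vo - wo)"
proof -
  have w0: "(1 - g) * w0 = x + (1 - lam) * g * eta + lam * g * w1 - g * w1"
    using flow_w bellman by linarith
  have "(1 - g) * (v0 - x / (1 - g)) = (1 - g) * v0 - x"
    using g by (simp add: field_simps)
  also have "\<dots> = g * (1 - lam) * (eta - v1) + lam * ((1 - g) * v0 - (1 - g) * w0) + (1 - lam) * (vo - wo)"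
    unfolding w0 flow_v bellman by (simp add: algebra_simps)
  also have "\<dots> = (1 - g) * (g * (1 - lam) / (1 - g) * (eta - v1) + lam * (v0 - w0)
      + (1 - lam) / (1 - g) * (vo - wo))"
    using g by (simp add: divide_simps) (simp add: algebra_simps)
  finally show ?thesis using g by simp
qed

theorem mainTheorem8:
  fixes S :: "'s measure" and A :: "'a measure"
    and P :: "'s \<times> 'a \<Rightarrow> 's measure" and r :: "'s \<Rightarrow> 'a \<Rightarrow> real" and g :: real
    and h :: "'s \<Rightarrow> real" and lam :: real
    and pol :: "'s \<Rightarrow> 'a measure" and d0 :: "'s measure" and V :: "'s \<Rightarrow> real"
  assumes P_kernel: "P \<in> S \<Otimes>\<^sub>M A \<rightarrow>\<^sub>M prob_algebra S"
    and r_meas: "(\<lambda>sa. r (fst sa) (snd sa)) \<in> borel_measurable (S \<Otimes>\<^sub>M A)"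
    and r_range: "\<And>s a. s \<in> space S \<Longrightarrow> a \<in> space A \<Longrightarrow> 0 \<le> r s a \<and> r s a \<le> 1"
    and g_range: "0 \<le> g" "g < 1"
    and h_meas: "h \<in> borel_measurable S"
    and h_bdd: "\<exists>B. \<forall>s\<in>space S. \<bar>h s\<bar> \<le> B"
    and lam_range: "0 \<le> lam" "lam \<le> 1"
    and pi_kernel: "pol \<in> S \<rightarrow>\<^sub>M prob_algebra A"
    and d0_prob: "d0 \<in> space (prob_algebra S)"
    and V_meas: "V \<in> borel_measurable S"
    and V_bdd: "\<exists>B. \<forall>s\<in>space S. \<bar>V s\<bar> \<le> B"
  shows "eval_dist d0 V - eval_dist d0 (disc_value S A P pol r g) =
      g * (1 - lam) / (1 - g) *
        (\<integral>sa. (\<integral>s'. h s' - V s' \<partial>(P sa)) \<partial>(sa_dist S A pol (occupancy S P pol g d0)))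
    + lam * (eval_dist d0 V
             - eval_dist d0 (disc_value S A P pol (reshaped_reward P r g lam h) (lam * g)))
    + (1 - lam) / (1 - g) *
        (eval_dist (occupancy S P pol g d0) V
         - eval_dist (occupancy S P pol g d0) (disc_value S A P pol (reshaped_reward P r g lam h) (lam * g)))"
proof -
  interpret mdp_policy S A P pol using P_kernel pi_kernel by unfold_locales
  define occ where "occ = occupancy S P pol g d0"
  define rt where "rt = reshaped_reward P r g lam h"
  define Vt where "Vt = disc_value S A P pol rt (lam * g)"
  have occ: "occ \<in> space (prob_algebra S)"
    unfolding occ_def by (rule occupancy_prob[OF g_range d0_prob])
  have r: "bounded_borel (S \<Otimes>\<^sub>M A) (\<lambda>sa. r (fst sa) (snd sa))"
    using r_range by (intro bounded_borelI[OF r_meas, where B=1]) (force simp: space_pair_measure)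
  have h: "bounded_borel S h" and V: "bounded_borel S V"
    using h_meas h_bdd V_meas V_bdd unfolding bounded_borel_def by blast+
  have rt: "bounded_borel (S \<Otimes>\<^sub>M A) (\<lambda>sa. rt (fst sa) (snd sa))"
    unfolding rt_def by (rule bounded_borel_reshaped_reward[OF r h])
  have lam_g: "\<bar>lam * g\<bar> < 1"
    using g_range lam_range mult_left_le_one_le[of g lam] by simp
  have value_occupancy: "eval_dist d0 (disc_value S A P pol r g)
      = (\<integral>sa. r (fst sa) (snd sa) \<partial>sa_dist S A pol occ) / (1 - g)"
    unfolding eval_dist_def occ_def by (rule integral_disc_value_occupancy[OF g_range d0_prob r])
  have flow_V: "(\<integral>s. V s \<partial>occ) = (1 - g) * (\<integral>s. V s \<partial>d0) + g * (\<integral>s. V s \<partial>mdp_step P pol occ)"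
    unfolding occ_def by (rule integral_occupancy_flow[OF g_range d0_prob V])
  have flow_Vt: "(\<integral>s. Vt s \<partial>occ) = (1 - g) * (\<integral>s. Vt s \<partial>d0) + g * (\<integral>s. Vt s \<partial>mdp_step P pol occ)"
    unfolding occ_def Vt_def
    by (rule integral_occupancy_flow[OF g_range d0_prob bounded_borel_disc_value[OF rt lam_g]])
  have bellman: "(\<integral>s. Vt s \<partial>occ) = (\<integral>sa. r (fst sa) (snd sa) \<partial>sa_dist S A pol occ)
      + (1 - lam) * g * (\<integral>s. h s \<partial>mdp_step P pol occ) + lam * g * (\<integral>s. Vt s \<partial>mdp_step P pol occ)"
    unfolding Vt_def integral_disc_value_step[OF rt lam_g occ]
    unfolding rt_def integral_reshaped_reward[OF occ r h] ..
  have advantage: "(\<integral>sa. (\<integral>s'. h s' - V s' \<partial>P sa) \<partial>sa_dist S A pol occ)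
      = (\<integral>s. h s \<partial>mdp_step P pol occ) - (\<integral>s. V s \<partial>mdp_step P pol occ)"
    using integral_sa_dist_transition[OF occ bounded_borel_diff[OF h V]]
    by (simp add: integrable_bounded_borel[OF mdp_step_prob[OF occ]] h V)
  show ?thesis
    unfolding eval_dist_def value_occupancy[unfolded eval_dist_def] advantage
      occ_def[symmetric] rt_def[symmetric] Vt_def[symmetric]
    by (rule value_difference_identity[OF g_range(2) flow_V flow_Vt bellman])
qed

end
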